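(* Let $0\le\alpha\le\beta\le\pi/2$, $P_1,P_2>0$, and let $\theta^*\in[\alpha,\beta]$ be a maximizer of $\phi$ on $[\alpha,\beta]$. (i) On $[\theta^*,\beta]$ consider the upper-diagonal corner curve $x(\theta)=\frac12\ln(1+\phi(\theta))-\frac12\ln(1+\phi_2(\theta))$, $y(\theta)=\frac12\ln(1+\phi_2(\theta))$; then along this curve $\frac{d^2y}{dx^2}\le0$, i.e. $y$ is a concave function of $x$. (ii) On $[\alpha,\theta^*]$ consider the lower-diagonal corner curve $x(\theta)=\frac12\ln(1+\phi_1(\theta))$, $y(\theta)=\frac12\ln(1+\phi(\theta))-\frac12\ln(1+\phi_1(\theta))$; then along this curve $y$ is likewise a concave function of $x$.
   Context: $\phi_1(\theta)=P_1\cos^2(\theta-\alpha)$, $\phi_2(\theta)=P_2\cos^2(\theta-\beta)$, $\phi=\phi_1+\phi_2$. These curves are the corner points (maximizing $R_2$ then $R_1$, resp. $R_1$ then $R_2$, on the dominant face) of the pentagonal rate sets $\{(R_1,R_2)\ge0:R_1\le\mathcal C(\phi_1(\theta)),R_2\le\mathcal C(\phi_2(\theta)),R_1+R_2\le\mathcal C(\phi(\theta))\}$, with rates in nats. *)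

theory Defs
  imports "HOL-Analysis.Analysis"
begin

definition phi1 :: "real \<Rightarrow> real \<Rightarrow> real \<Rightarrow> real" where
  "phi1 P1 \<alpha> \<theta> = P1 * (cos (\<theta> - \<alpha>))\<^sup>2"

definition phi2 :: "real \<Rightarrow> real \<Rightarrow> real \<Rightarrow> real" where
  "phi2 P2 \<beta> \<theta> = P2 * (cos (\<theta> - \<beta>))\<^sup>2"

definition phi :: "real \<Rightarrow> real \<Rightarrow> real \<Rightarrow> real \<Rightarrow> real \<Rightarrow> real" where
  "phi P1 P2 \<alpha> \<beta> \<theta> = phi1 P1 \<alpha> \<theta> + phi2 P2 \<beta> \<theta>"

definition Cap :: "real \<Rightarrow> real" where
  "Cap s = ln (1 + s) / 2"

end

theory Submission
  imports Defs
begin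

text \<open>Along both corner curves x is strictly decreasing in \<theta>, so y is a function g of x, and g is
concave as soon as the slope (dy/d\<theta>)/(dx/d\<theta>) is nondecreasing in \<theta>; this follows from a
three-point chord inequality obtained with Cauchy's mean value theorem. With D = \<phi>', the slope is
1/(K H - 1) on the upper curve and K H - 1 on the lower one, where K = D/\<phi>2' resp. D/\<phi>1' and
H = (1+\<phi>2)/(1+\<phi>) resp. (1+\<phi>1)/(1+\<phi>). K is monotone because sin(2(\<theta>-\<alpha>))/sin(2(\<beta>-\<theta>)) increases
on (\<alpha>,\<beta>); this also makes \<phi>' change sign at most once, so K \<le> 0 on either side of the maximiser
\<theta>*. H is monotone because \<phi>1 decreases and \<phi>2 increases on [\<alpha>,\<beta>].\<close>

lemma sin_double_cross_le:
  fixes \<alpha> \<beta> s t :: real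
  assumes "\<alpha> \<le> s" "s \<le> t" "t \<le> \<beta>" "\<beta> - \<alpha> \<le> pi/2"
  shows "sin (2*(s-\<alpha>)) * sin (2*(\<beta>-t)) \<le> sin (2*(t-\<alpha>)) * sin (2*(\<beta>-s))"
proof -
  define u where "u = 2*(s-\<alpha>) + 2*(\<beta>-t)"
  define v where "v = 2*(t-\<alpha>) + 2*(\<beta>-s)"
  have lhs: "sin (2*(s-\<alpha>)) * sin (2*(\<beta>-t)) = (cos (2*(s+t-\<alpha>-\<beta>)) - cos u)/2"
    unfolding sin_times_sin u_def by (simp add: algebra_simps)
  have rhs: "sin (2*(t-\<alpha>)) * sin (2*(\<beta>-s)) = (cos (2*(s+t-\<alpha>-\<beta>)) - cos v)/2"
    unfolding sin_times_sin v_def by (simp add: algebra_simps)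
  have "cos u - cos v = 2 * sin ((u+v)/2) * sin ((v-u)/2)" by (rule cos_diff_cos)
  also have "(u+v)/2 = 2*(\<beta>-\<alpha>)" unfolding u_def v_def by (simp add: field_simps)
  also have "(v-u)/2 = 2*(t-s)" unfolding u_def v_def by (simp add: field_simps)
  also have "2 * sin (2*(\<beta>-\<alpha>)) * sin (2*(t-s)) \<ge> 0" using assms by (simp add: sin_ge_zero)
  finally show ?thesis unfolding lhs rhs by simp
qed

lemma has_real_derivative_cos_sq:
  "((\<lambda>t. P * (cos (t - c))\<^sup>2) has_real_derivative P * sin (2*(c-t))) (at t)"
proof -
  have "sin (2*(c-t)) = - (2 * sin (t-c) * cos (t-c))"
    by (metis minus_diff_eq mult_minus_right sin_double sin_minus)
  then show ?thesis by (auto intro!: derivative_eq_intros simp: power2_eq_square)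
qed

lemma has_real_derivative_Cap:
  assumes "(f has_real_derivative f') (at t)" "f t \<ge> 0"
  shows "((\<lambda>t. Cap (f t)) has_real_derivative f' / (2 * (1 + f t))) (at t)"
  using assms unfolding Cap_def by (auto intro!: derivative_eq_intros simp: field_simps)

lemma Cap_deriv_quotient:
  fixes c d m n :: real
  assumes "0 < m" "0 < n" "c \<noteq> 0"
  shows "d / (2 * n) = c / (2 * m) * (d / c * (m / n))"
  using assms by (simp add: field_simps)

lemma one_plus_div_one_plus_mono:
  fixes a a' b b' :: real
  assumes "0 \<le> a'" "a' \<le> a" "0 \<le> b" "b \<le> b'"
  shows "(1 + b) / (1 + a + b) \<le> (1 + b') / (1 + a' + b')"
proof -
  have "(1 + b) * a' \<le> (1 + b') * a" using assms by (intro mult_mono) auto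
  then have "(1 + b) * (1 + a' + b') \<le> (1 + b') * (1 + a + b)" by (simp add: algebra_simps)
  then show ?thesis using assms by (simp add: divide_simps)
qed

lemma mult_antimono_nonpos_nonneg:
  fixes k k' h h' :: real
  assumes "k' \<le> k" "k \<le> 0" "0 \<le> h" "h \<le> h'"
  shows "k' * h' \<le> k * h"
proof -
  have "k' * h' \<le> k * h'" using assms by (simp add: mult_right_mono)
  also have "\<dots> \<le> k * h" using assms by (simp add: mult_left_mono_neg)
  finally show ?thesis .
qed

lemma strict_antimono_of_deriv_neg:
  fixes x X :: "real \<Rightarrow> real"
  assumes "\<And>t. t \<in> {p..q} \<Longrightarrow> isCont x t"
    and "\<And>t. t \<in> {p<..<q} \<Longrightarrow> (x has_real_derivative X t) (at t)"
    and "\<And>t. t \<in> {p<..<q} \<Longrightarrow> X t < 0"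
    and "p \<le> s" "s < t" "t \<le> q"
  shows "x t < x s"
proof (rule DERIV_neg_imp_decreasing_open[OF \<open>s < t\<close>])
  show "\<exists>y. (x has_real_derivative y) (at z) \<and> y < 0" if "s < z" "z < t" for z
    using assms(2-6) that by (intro exI[of _ "X z"]) auto
  show "continuous_on {s..t} x"
    using assms by (intro continuous_at_imp_continuous_on) auto
qed

lemma param_curve_chord_slopes:
  fixes x y X Y :: "real \<Rightarrow> real"
  assumes cont: "\<And>t. t \<in> {p..q} \<Longrightarrow> isCont x t" "\<And>t. t \<in> {p..q} \<Longrightarrow> isCont y t"
    and deriv: "\<And>t. t \<in> {p<..<q} \<Longrightarrow> (x has_real_derivative X t) (at t)"
      "\<And>t. t \<in> {p<..<q} \<Longrightarrow> (y has_real_derivative Y t) (at t)"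
    and neg: "\<And>t. t \<in> {p<..<q} \<Longrightarrow> X t < 0"
    and slope: "\<And>s t. p < s \<Longrightarrow> s \<le> t \<Longrightarrow> t < q \<Longrightarrow> Y s / X s \<le> Y t / X t"
    and order: "p \<le> c" "c < b" "b < a" "a \<le> q"
  shows "(y c - y b) * (x b - x a) \<le> (y b - y a) * (x c - x b)"
proof -
  obtain \<xi> where \<xi>: "b < \<xi>" "\<xi> < a" "(y a - y b) * X \<xi> = (x a - x b) * Y \<xi>"
    using GMVT'[of b a y x X Y] order cont deriv by force
  obtain \<eta> where \<eta>: "c < \<eta>" "\<eta> < b" "(y b - y c) * X \<eta> = (x b - x c) * Y \<eta>"
    using GMVT'[of c b y x X Y] order cont deriv by force
  have "X \<xi> < 0" "X \<eta> < 0" using neg \<xi> \<eta> order by auto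
  then have chord_ba: "y b - y a = (x b - x a) * (Y \<xi> / X \<xi>)"
    and chord_cb: "y c - y b = (x c - x b) * (Y \<eta> / X \<eta>)"
    using \<xi>(3) \<eta>(3) by (simp_all add: field_simps)
  have "x a < x b" "x b < x c"
    by (rule strict_antimono_of_deriv_neg[of p q x X], use cont deriv neg order in auto)+
  then have "0 \<le> (x b - x a) * (x c - x b)" by simp
  moreover have "Y \<eta> / X \<eta> \<le> Y \<xi> / X \<xi>" using slope \<xi> \<eta> order by simp
  ultimately have "(x b - x a) * (x c - x b) * (Y \<eta> / X \<eta>) \<le> (x b - x a) * (x c - x b) * (Y \<xi> / X \<xi>)"
    by (intro mult_left_mono)
  then show ?thesis unfolding chord_ba chord_cb by (simp add: ac_simps)
qed

lemma concave_on_param_curve: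
  fixes x y X Y :: "real \<Rightarrow> real"
  assumes cont: "\<And>t. t \<in> {p..q} \<Longrightarrow> isCont x t" "\<And>t. t \<in> {p..q} \<Longrightarrow> isCont y t"
    and deriv: "\<And>t. t \<in> {p<..<q} \<Longrightarrow> (x has_real_derivative X t) (at t)"
      "\<And>t. t \<in> {p<..<q} \<Longrightarrow> (y has_real_derivative Y t) (at t)"
    and neg: "\<And>t. t \<in> {p<..<q} \<Longrightarrow> X t < 0"
    and slope: "\<And>s t. p < s \<Longrightarrow> s \<le> t \<Longrightarrow> t < q \<Longrightarrow> Y s / X s \<le> Y t / X t"
  shows "\<exists>g. concave_on (x ` {p..q}) g \<and> (\<forall>t\<in>{p..q}. y t = g (x t))"
proof -
  have dec: "x t < x s" if "p \<le> s" "s < t" "t \<le> q" for s t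
    using strict_antimono_of_deriv_neg[of p q x X s t] cont(1) deriv(1) neg that by blast
  have preimage_order: "s < t" if "s \<in> {p..q}" "t \<in> {p..q}" "x t < x s" for s t
  proof (rule ccontr)
    assume "\<not> s < t"
    then consider "t = s" | "t < s" by linarith
    then show False using dec[of t s] that by cases auto
  qed
  have "inj_on x {p..q}"
  proof (rule inj_onI)
    fix s t assume "s \<in> {p..q}" "t \<in> {p..q}" "x s = x t"
    then show "s = t" using dec[of s t] dec[of t s] by (cases s t rule: linorder_cases) auto
  qed
  define g where "g = y \<circ> inv_into {p..q} x"
  have g_x: "g (x t) = y t" if "t \<in> {p..q}" for t
    using \<open>inj_on x {p..q}\<close> that by (simp add: g_def)
  have "connected (x ` {p..q})"
    using cont(1) by (intro connected_continuous_image continuous_at_imp_continuous_on) auto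
  then have convex: "convex (x ` {p..q})" by (simp add: connected_convex_1)
  have "concave_on (x ` {p..q}) g"
  proof (rule concave_on_linorderI[OF _ convex])
    fix \<mu> u v :: real assume \<mu>: "0 < \<mu>" "\<mu> < 1" and uv: "u \<in> x ` {p..q}" "v \<in> x ` {p..q}" "u < v"
    define w where "w = (1 - \<mu>) * u + \<mu> * v"
    have "w \<in> x ` {p..q}"
      using convexD[OF convex uv(1,2), of "1 - \<mu>" \<mu>] \<mu> by (simp add: w_def)
    then obtain a b c where abc: "a \<in> {p..q}" "b \<in> {p..q}" "c \<in> {p..q}"
      and xabc: "u = x a" "w = x b" "v = x c"
      using uv by blast
    have wu: "w - u = \<mu> * (v - u)" and vw: "v - w = (1 - \<mu>) * (v - u)"
      unfolding w_def by (simp_all add: algebra_simps)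
    have "0 < \<mu> * (v - u)" "0 < (1 - \<mu>) * (v - u)" using \<mu> uv by simp_all
    then have "u < w" "w < v" by (simp_all flip: wu vw)
    then have "c < b" "b < a" using preimage_order abc xabc by auto
    then have "(g v - g w) * (w - u) \<le> (g w - g u) * (v - w)"
      using param_curve_chord_slopes[OF cont deriv neg slope] abc xabc g_x by simp
    then have "(g v - g w) * \<mu> * (v - u) \<le> (g w - g u) * (1 - \<mu>) * (v - u)"
      unfolding wu vw by (simp add: ac_simps)
    then have "(g v - g w) * \<mu> \<le> (g w - g u) * (1 - \<mu>)" using uv by simp
    moreover have "(1 - \<mu>) *\<^sub>R u + \<mu> *\<^sub>R v = w" by (simp add: w_def)
    ultimately show "(1 - \<mu>) * g u + \<mu> * g v \<le> g ((1 - \<mu>) *\<^sub>R u + \<mu> *\<^sub>R v)"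
      by (simp add: algebra_simps)
  qed
  with g_x show ?thesis by auto
qed

lemma concave_on_param_curve_slope:
  fixes x y X Y G :: "real \<Rightarrow> real"
  assumes deriv: "\<And>t. (x has_real_derivative X t) (at t)" "\<And>t. (y has_real_derivative Y t) (at t)"
    and neg: "\<And>t. t \<in> {p<..<q} \<Longrightarrow> X t < 0"
    and factor: "\<And>t. t \<in> {p<..<q} \<Longrightarrow> Y t = X t * G t"
    and mono: "\<And>s t. p < s \<Longrightarrow> s \<le> t \<Longrightarrow> t < q \<Longrightarrow> G s \<le> G t"
  shows "\<exists>g. concave_on (x ` {p..q}) g \<and> (\<forall>t\<in>{p..q}. y t = g (x t))"
proof (rule concave_on_param_curve[where X=X and Y=Y])
  show "isCont x t" "isCont y t" "(x has_real_derivative X t) (at t)" "(y has_real_derivative Y t) (at t)"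
    for t using deriv by (auto intro: DERIV_isCont)
  show "X t < 0" if "t \<in> {p<..<q}" for t
    using neg that .
  show "Y s / X s \<le> Y t / X t" if "p < s" "s \<le> t" "t < q" for s t
    using mono[OF that] factor[of s] factor[of t] neg[of s] neg[of t] that by simp
qed

lemma concave_on_param_curve_inverse_slope:
  fixes x y X Y G :: "real \<Rightarrow> real"
  assumes deriv: "\<And>t. (x has_real_derivative X t) (at t)" "\<And>t. (y has_real_derivative Y t) (at t)"
    and pos: "\<And>t. t \<in> {p<..<q} \<Longrightarrow> 0 < Y t"
    and factor: "\<And>t. t \<in> {p<..<q} \<Longrightarrow> X t = Y t * G t"
    and neg: "\<And>t. t \<in> {p<..<q} \<Longrightarrow> G t < 0"
    and antimono: "\<And>s t. p < s \<Longrightarrow> s \<le> t \<Longrightarrow> t < q \<Longrightarrow> G t \<le> G s"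
  shows "\<exists>g. concave_on (x ` {p..q}) g \<and> (\<forall>t\<in>{p..q}. y t = g (x t))"
proof (rule concave_on_param_curve_slope[where X=X and Y=Y and G="\<lambda>t. inverse (G t)"])
  show "(x has_real_derivative X t) (at t)" "(y has_real_derivative Y t) (at t)" for t
    using deriv by auto
  show "X t < 0" if "t \<in> {p<..<q}" for t
    using factor[OF that] pos[OF that] neg[OF that] by (simp add: mult_pos_neg)
  show "Y t = X t * inverse (G t)" if "t \<in> {p<..<q}" for t
    using factor[OF that] neg[OF that] by simp
  show "inverse (G s) \<le> inverse (G t)" if "p < s" "s \<le> t" "t < q" for s t
    using antimono[OF that] neg[of s] that by (intro le_imp_inverse_le_neg) auto
qed

lemma phi1_nonneg: "0 \<le> P \<Longrightarrow> 0 \<le> phi1 P \<alpha> t"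
  by (simp add: phi1_def)

lemma phi2_nonneg: "0 \<le> P \<Longrightarrow> 0 \<le> phi2 P \<beta> t"
  by (simp add: phi2_def)

locale corner_curves =
  fixes P1 P2 \<alpha> \<beta> :: real
  assumes angles: "0 \<le> \<alpha>" "\<alpha> \<le> \<beta>" "\<beta> \<le> pi / 2"
    and powers: "P1 > 0" "P2 > 0"
begin

abbreviation s1 :: "real \<Rightarrow> real" where "s1 t \<equiv> sin (2 * (t - \<alpha>))"

abbreviation s2 :: "real \<Rightarrow> real" where "s2 t \<equiv> sin (2 * (\<beta> - t))"

lemma s1_pos: "\<alpha> < t \<Longrightarrow> t < \<beta> \<Longrightarrow> 0 < s1 t"
  using angles by (intro sin_gt_zero) auto

lemma s2_pos: "\<alpha> < t \<Longrightarrow> t < \<beta> \<Longrightarrow> 0 < s2 t"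
  using angles by (intro sin_gt_zero) auto

lemma s_ratio_mono:
  assumes "\<alpha> < s" "s \<le> t" "t < \<beta>"
  shows "s1 s / s2 s \<le> s1 t / s2 t"
  using sin_double_cross_le[of \<alpha> s t \<beta>] s2_pos[of s] s2_pos[of t] assms angles
  by (simp add: divide_simps)

lemma s_coratio_antimono:
  assumes "\<alpha> < s" "s \<le> t" "t < \<beta>"
  shows "s2 t / s1 t \<le> s2 s / s1 s"
  using sin_double_cross_le[of \<alpha> s t \<beta>] s1_pos[of s] s1_pos[of t] assms angles
  by (simp add: divide_simps mult.commute)

lemma phi_nonneg: "0 \<le> phi P1 P2 \<alpha> \<beta> t"
  using phi1_nonneg phi2_nonneg powers by (simp add: phi_def add_nonneg_nonneg less_imp_le)

lemma has_real_derivative_phi1: "(phi1 P1 \<alpha> has_real_derivative - P1 * s1 t) (at t)"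
proof -
  have "sin (2 * (\<alpha> - t)) = - s1 t" by (metis minus_diff_eq mult_minus_right sin_minus)
  then show ?thesis using has_real_derivative_cos_sq[of P1 \<alpha> t] by (simp add: phi1_def[abs_def])
qed

lemma has_real_derivative_phi2: "(phi2 P2 \<beta> has_real_derivative P2 * s2 t) (at t)"
  using has_real_derivative_cos_sq[of P2 \<beta> t] by (simp add: phi2_def[abs_def])

lemma has_real_derivative_phi:
  "(phi P1 P2 \<alpha> \<beta> has_real_derivative P2 * s2 t - P1 * s1 t) (at t)"
  using DERIV_add[OF has_real_derivative_phi1 has_real_derivative_phi2]
  by (simp add: phi_def[abs_def])

lemma continuous_on_phi: "continuous_on S (phi P1 P2 \<alpha> \<beta>)"
  using DERIV_isCont[OF has_real_derivative_phi] by (simp add: continuous_at_imp_continuous_on)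

lemma phi1_antimono:
  assumes "\<alpha> \<le> s" "s \<le> t" "t \<le> \<beta>"
  shows "phi1 P1 \<alpha> t \<le> phi1 P1 \<alpha> s"
proof -
  have "cos (t - \<alpha>) \<le> cos (s - \<alpha>)" "0 \<le> cos (t - \<alpha>)"
    using assms angles by (auto intro!: cos_monotone_0_pi_le cos_ge_zero)
  then show ?thesis using powers by (simp add: phi1_def power_mono)
qed

lemma phi2_mono:
  assumes "\<alpha> \<le> s" "s \<le> t" "t \<le> \<beta>"
  shows "phi2 P2 \<beta> s \<le> phi2 P2 \<beta> t"
proof -
  have "cos (\<beta> - s) \<le> cos (\<beta> - t)" "0 \<le> cos (\<beta> - s)"
    using assms angles by (auto intro!: cos_monotone_0_pi_le cos_ge_zero)
  moreover have "cos (s - \<beta>) = cos (\<beta> - s)" "cos (t - \<beta>) = cos (\<beta> - t)"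
    by (metis cos_minus minus_diff_eq)+
  ultimately show ?thesis using powers by (simp add: phi2_def power_mono)
qed

lemma phi2_share_mono:
  assumes "\<alpha> \<le> s" "s \<le> t" "t \<le> \<beta>"
  shows "(1 + phi2 P2 \<beta> s) / (1 + phi P1 P2 \<alpha> \<beta> s) \<le> (1 + phi2 P2 \<beta> t) / (1 + phi P1 P2 \<alpha> \<beta> t)"
proof -
  have "0 \<le> phi1 P1 \<alpha> t" "0 \<le> phi2 P2 \<beta> s"
    using phi1_nonneg phi2_nonneg powers by (simp_all add: less_imp_le)
  then show ?thesis
    using one_plus_div_one_plus_mono[of "phi1 P1 \<alpha> t" "phi1 P1 \<alpha> s" "phi2 P2 \<beta> s" "phi2 P2 \<beta> t"]
      phi1_antimono[OF assms] phi2_mono[OF assms]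
    by (simp add: phi_def add.assoc)
qed

lemma phi1_share_antimono:
  assumes "\<alpha> \<le> s" "s \<le> t" "t \<le> \<beta>"
  shows "(1 + phi1 P1 \<alpha> t) / (1 + phi P1 P2 \<alpha> \<beta> t) \<le> (1 + phi1 P1 \<alpha> s) / (1 + phi P1 P2 \<alpha> \<beta> s)"
proof -
  have "0 \<le> phi2 P2 \<beta> s" "0 \<le> phi1 P1 \<alpha> t"
    using phi1_nonneg phi2_nonneg powers by (simp_all add: less_imp_le)
  then have "(1 + phi1 P1 \<alpha> t) / (1 + phi2 P2 \<beta> t + phi1 P1 \<alpha> t)
      \<le> (1 + phi1 P1 \<alpha> s) / (1 + phi2 P2 \<beta> s + phi1 P1 \<alpha> s)"
    using phi1_antimono[OF assms] phi2_mono[OF assms] by (intro one_plus_div_one_plus_mono)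
  moreover have "1 + phi P1 P2 \<alpha> \<beta> u = 1 + phi2 P2 \<beta> u + phi1 P1 \<alpha> u" for u
    by (simp add: phi_def)
  ultimately show ?thesis by (simp add: add.assoc)
qed

lemma phi_deriv_div_s2:
  "\<alpha> < t \<Longrightarrow> t < \<beta> \<Longrightarrow> (P2 * s2 t - P1 * s1 t) / (P2 * s2 t) = 1 - P1 / P2 * (s1 t / s2 t)"
  using s2_pos[of t] powers by (simp add: field_simps)

lemma phi_deriv_div_s1:
  "\<alpha> < t \<Longrightarrow> t < \<beta> \<Longrightarrow> (P2 * s2 t - P1 * s1 t) / (- P1 * s1 t) = 1 - P2 / P1 * (s2 t / s1 t)"
  using s1_pos[of t] powers by (simp add: field_simps)

end

locale corner_curves_max = corner_curves +
  fixes \<theta>s :: real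
  assumes \<theta>s_mem: "\<theta>s \<in> {\<alpha>..\<beta>}"
    and \<theta>s_max: "\<forall>\<theta>\<in>{\<alpha>..\<beta>}. phi P1 P2 \<alpha> \<beta> \<theta> \<le> phi P1 P2 \<alpha> \<beta> \<theta>s"
begin

lemma phi_deriv_nonpos_right_of_max:
  assumes t: "\<theta>s < t" "t < \<beta>"
  shows "P2 * s2 t - P1 * s1 t \<le> 0"
proof (rule ccontr)
  have t': "\<alpha> < t" "t < \<beta>" using t \<theta>s_mem by auto
  assume "\<not> P2 * s2 t - P1 * s1 t \<le> 0"
  then have "0 < 1 - P1 / P2 * (s1 t / s2 t)"
    using phi_deriv_div_s2[OF t'] s2_pos[OF t'] powers by (simp flip: zero_less_divide_iff)
  have "phi P1 P2 \<alpha> \<beta> \<theta>s < phi P1 P2 \<alpha> \<beta> t"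
  proof (rule DERIV_pos_imp_increasing_open[OF t(1) _ continuous_on_phi])
    fix z assume "\<theta>s < z" "z < t"
    then have z: "\<alpha> < z" "z < \<beta>" "z \<le> t" using t \<theta>s_mem by auto
    have "P1 / P2 * (s1 z / s2 z) \<le> P1 / P2 * (s1 t / s2 t)"
      using s_ratio_mono[of z t] z t powers by (intro mult_left_mono) auto
    then have "0 < (P2 * s2 z - P1 * s1 z) / (P2 * s2 z)"
      using phi_deriv_div_s2[OF z(1,2)] \<open>0 < 1 - _\<close> by linarith
    then have "0 < P2 * s2 z - P1 * s1 z"
      using mult_pos_pos[OF powers(2) s2_pos[OF z(1,2)]] by (simp add: zero_less_divide_iff)
    then show "\<exists>y. (phi P1 P2 \<alpha> \<beta> has_real_derivative y) (at z) \<and> y > 0"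
      using has_real_derivative_phi by blast
  qed
  moreover have "phi P1 P2 \<alpha> \<beta> t \<le> phi P1 P2 \<alpha> \<beta> \<theta>s"
    using \<theta>s_max t' by auto
  ultimately show False by simp
qed

lemma phi_deriv_nonneg_left_of_max:
  assumes t: "\<alpha> < t" "t < \<theta>s"
  shows "0 \<le> P2 * s2 t - P1 * s1 t"
proof (rule ccontr)
  have t': "\<alpha> < t" "t < \<beta>" using t \<theta>s_mem by auto
  assume "\<not> 0 \<le> P2 * s2 t - P1 * s1 t"
  then have "1 - P1 / P2 * (s1 t / s2 t) < 0"
    using phi_deriv_div_s2[OF t'] s2_pos[OF t'] powers by (simp flip: divide_less_0_iff)
  have "phi P1 P2 \<alpha> \<beta> \<theta>s < phi P1 P2 \<alpha> \<beta> t"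
  proof (rule DERIV_neg_imp_decreasing_open[OF t(2) _ continuous_on_phi])
    fix z assume "t < z" "z < \<theta>s"
    then have z: "\<alpha> < z" "z < \<beta>" "t \<le> z" using t \<theta>s_mem by auto
    have "P1 / P2 * (s1 t / s2 t) \<le> P1 / P2 * (s1 z / s2 z)"
      using s_ratio_mono[of t z] z t powers by (intro mult_left_mono) auto
    then have "(P2 * s2 z - P1 * s1 z) / (P2 * s2 z) < 0"
      using phi_deriv_div_s2[OF z(1,2)] \<open>1 - _ < 0\<close> by linarith
    then have "P2 * s2 z - P1 * s1 z < 0"
      using mult_pos_pos[OF powers(2) s2_pos[OF z(1,2)]] by (simp add: divide_less_0_iff)
    then show "\<exists>y. (phi P1 P2 \<alpha> \<beta> has_real_derivative y) (at z) \<and> y < 0"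
      using has_real_derivative_phi by blast
  qed
  moreover have "phi P1 P2 \<alpha> \<beta> t \<le> phi P1 P2 \<alpha> \<beta> \<theta>s"
    using \<theta>s_max t' by auto
  ultimately show False by simp
qed

lemma upper_corner_concave:
  "\<exists>g. concave_on ((\<lambda>\<theta>. Cap (phi P1 P2 \<alpha> \<beta> \<theta>) - Cap (phi2 P2 \<beta> \<theta>)) ` {\<theta>s..\<beta>}) g
     \<and> (\<forall>\<theta>\<in>{\<theta>s..\<beta>}. Cap (phi2 P2 \<beta> \<theta>) = g (Cap (phi P1 P2 \<alpha> \<beta> \<theta>) - Cap (phi2 P2 \<beta> \<theta>)))"
proof -
  define Y where "Y t = P2 * s2 t / (2 * (1 + phi2 P2 \<beta> t))" for t
  define X where "X t = (P2 * s2 t - P1 * s1 t) / (2 * (1 + phi P1 P2 \<alpha> \<beta> t)) - Y t" for t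
  define K where "K t = (P2 * s2 t - P1 * s1 t) / (P2 * s2 t)" for t
  define H where "H t = (1 + phi2 P2 \<beta> t) / (1 + phi P1 P2 \<alpha> \<beta> t)" for t
  have K_nonpos: "K t \<le> 0" if "\<theta>s < t" "t < \<beta>" for t
    unfolding K_def using phi_deriv_nonpos_right_of_max[OF that] s2_pos[of t] that \<theta>s_mem powers
    by (simp add: divide_nonpos_pos)
  have H_pos: "0 < H t" for t
    unfolding H_def using phi_nonneg phi2_nonneg[of P2] powers by (simp add: add_pos_nonneg)
  show ?thesis
  proof (rule concave_on_param_curve_inverse_slope[where X=X and Y=Y and G="\<lambda>t. K t * H t - 1"])
    show dy: "((\<lambda>\<theta>. Cap (phi2 P2 \<beta> \<theta>)) has_real_derivative Y t) (at t)" for t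
      unfolding Y_def using powers
      by (intro has_real_derivative_Cap has_real_derivative_phi2 phi2_nonneg) simp
    show "((\<lambda>\<theta>. Cap (phi P1 P2 \<alpha> \<beta> \<theta>) - Cap (phi2 P2 \<beta> \<theta>)) has_real_derivative X t) (at t)" for t
      unfolding X_def by (intro DERIV_diff dy has_real_derivative_Cap has_real_derivative_phi phi_nonneg)
    fix t assume "t \<in> {\<theta>s<..<\<beta>}"
    then have t: "\<alpha> < t" "t < \<beta>" "\<theta>s < t" using \<theta>s_mem by auto
    show "0 < Y t"
      unfolding Y_def using s2_pos[OF t(1,2)] phi2_nonneg[of P2] powers by (simp add: add_pos_nonneg)
    have "(P2 * s2 t - P1 * s1 t) / (2 * (1 + phi P1 P2 \<alpha> \<beta> t)) = Y t * (K t * H t)"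
      unfolding Y_def K_def H_def using s2_pos[OF t(1,2)] phi_nonneg phi2_nonneg[of P2] powers
      by (intro Cap_deriv_quotient) (simp_all add: add_pos_nonneg)
    then show "X t = Y t * (K t * H t - 1)" unfolding X_def by (simp add: algebra_simps)
    show "K t * H t - 1 < 0"
      using mult_nonpos_nonneg[OF K_nonpos[OF t(3,2)] less_imp_le[OF H_pos[of t]]] by simp
  next
    fix s t assume st: "\<theta>s < s" "s \<le> t" "t < \<beta>"
    then have s: "\<alpha> < s" "s < \<beta>" and t: "\<alpha> < t" "t < \<beta>" using \<theta>s_mem by auto
    have "K t * H t \<le> K s * H s"
    proof (rule mult_antimono_nonpos_nonneg)
      have "P1 / P2 * (s1 s / s2 s) \<le> P1 / P2 * (s1 t / s2 t)"
        using s_ratio_mono[of s t] st s powers by (intro mult_left_mono) auto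
      then show "K t \<le> K s" unfolding K_def phi_deriv_div_s2[OF s] phi_deriv_div_s2[OF t] by linarith
      show "K s \<le> 0" using K_nonpos st s by simp
      show "0 \<le> H s" using H_pos[of s] by simp
      show "H s \<le> H t" unfolding H_def using phi2_share_mono st s t by simp
    qed
    then show "K t * H t - 1 \<le> K s * H s - 1" by simp
  qed
qed

lemma lower_corner_concave:
  "\<exists>g. concave_on ((\<lambda>\<theta>. Cap (phi1 P1 \<alpha> \<theta>)) ` {\<alpha>..\<theta>s}) g
     \<and> (\<forall>\<theta>\<in>{\<alpha>..\<theta>s}. Cap (phi P1 P2 \<alpha> \<beta> \<theta>) - Cap (phi1 P1 \<alpha> \<theta>) = g (Cap (phi1 P1 \<alpha> \<theta>)))"
proof -
  define X where "X t = - P1 * s1 t / (2 * (1 + phi1 P1 \<alpha> t))" for t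
  define Y where "Y t = (P2 * s2 t - P1 * s1 t) / (2 * (1 + phi P1 P2 \<alpha> \<beta> t)) - X t" for t
  define K where "K t = (P2 * s2 t - P1 * s1 t) / (- P1 * s1 t)" for t
  define H where "H t = (1 + phi1 P1 \<alpha> t) / (1 + phi P1 P2 \<alpha> \<beta> t)" for t
  have K_nonpos: "K t \<le> 0" if "\<alpha> < t" "t < \<theta>s" for t
    unfolding K_def using phi_deriv_nonneg_left_of_max[OF that] s1_pos[of t] that \<theta>s_mem powers
    by (simp add: divide_nonneg_neg)
  show ?thesis
  proof (rule concave_on_param_curve_slope[where X=X and Y=Y and G="\<lambda>t. K t * H t - 1"])
    show dx: "((\<lambda>\<theta>. Cap (phi1 P1 \<alpha> \<theta>)) has_real_derivative X t) (at t)" for t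
      unfolding X_def using powers
      by (intro has_real_derivative_Cap has_real_derivative_phi1 phi1_nonneg) simp
    show "((\<lambda>\<theta>. Cap (phi P1 P2 \<alpha> \<beta> \<theta>) - Cap (phi1 P1 \<alpha> \<theta>)) has_real_derivative Y t) (at t)" for t
      unfolding Y_def by (intro DERIV_diff dx has_real_derivative_Cap has_real_derivative_phi phi_nonneg)
    fix t assume "t \<in> {\<alpha><..<\<theta>s}"
    then have t: "\<alpha> < t" "t < \<beta>" using \<theta>s_mem by auto
    show "X t < 0"
      unfolding X_def using s1_pos[OF t] phi1_nonneg[of P1] powers
      by (simp add: add_pos_nonneg divide_neg_pos)
    have "(P2 * s2 t - P1 * s1 t) / (2 * (1 + phi P1 P2 \<alpha> \<beta> t)) = X t * (K t * H t)"
      unfolding X_def K_def H_def using s1_pos[OF t] phi_nonneg phi1_nonneg[of P1] powers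
      by (intro Cap_deriv_quotient) (simp_all add: add_pos_nonneg)
    then show "Y t = X t * (K t * H t - 1)" unfolding Y_def by (simp add: algebra_simps)
  next
    fix s t assume st: "\<alpha> < s" "s \<le> t" "t < \<theta>s"
    then have s: "\<alpha> < s" "s < \<beta>" and t: "\<alpha> < t" "t < \<beta>" using \<theta>s_mem by auto
    have "K s * H s \<le> K t * H t"
    proof (rule mult_antimono_nonpos_nonneg)
      have "P2 / P1 * (s2 t / s1 t) \<le> P2 / P1 * (s2 s / s1 s)"
        using s_coratio_antimono[of s t] st t powers by (intro mult_left_mono) auto
      then show "K s \<le> K t" unfolding K_def phi_deriv_div_s1[OF s] phi_deriv_div_s1[OF t] by linarith
      show "K t \<le> 0" using K_nonpos st by simp
      show "0 \<le> H t" unfolding H_def using phi_nonneg phi1_nonneg[of P1] powers by simp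
      show "H t \<le> H s" unfolding H_def using phi1_share_antimono st s t by simp
    qed
    then show "K s * H s - 1 \<le> K t * H t - 1" by simp
  qed
qed

end

theorem lemma8:
  fixes P1 P2 \<alpha> \<beta> \<theta>s :: real
  assumes "0 \<le> \<alpha>" "\<alpha> \<le> \<beta>" "\<beta> \<le> pi / 2"
    and "P1 > 0" "P2 > 0"
    and "\<theta>s \<in> {\<alpha>..\<beta>}"
    and "\<forall>\<theta>\<in>{\<alpha>..\<beta>}. phi P1 P2 \<alpha> \<beta> \<theta> \<le> phi P1 P2 \<alpha> \<beta> \<theta>s"
  shows "(\<exists>g. concave_on
              ((\<lambda>\<theta>. Cap (phi P1 P2 \<alpha> \<beta> \<theta>) - Cap (phi2 P2 \<beta> \<theta>)) ` {\<theta>s..\<beta>}) g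
           \<and> (\<forall>\<theta>\<in>{\<theta>s..\<beta>}. Cap (phi2 P2 \<beta> \<theta>)
                 = g (Cap (phi P1 P2 \<alpha> \<beta> \<theta>) - Cap (phi2 P2 \<beta> \<theta>))))
    \<and> (\<exists>g. concave_on ((\<lambda>\<theta>. Cap (phi1 P1 \<alpha> \<theta>)) ` {\<alpha>..\<theta>s}) g
           \<and> (\<forall>\<theta>\<in>{\<alpha>..\<theta>s}. Cap (phi P1 P2 \<alpha> \<beta> \<theta>) - Cap (phi1 P1 \<alpha> \<theta>)
                 = g (Cap (phi1 P1 \<alpha> \<theta>))))"
proof -
  interpret corner_curves_max P1 P2 \<alpha> \<beta> \<theta>s
    using assms by unfold_locales auto
  show ?thesis using upper_corner_concave lower_corner_concave by blast
qed

end
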